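(* Let $1\le j\le N-1$, write $x=(x',x'')\in\mathbb{R}^j\times\mathbb{R}^{N-j}$, and let $\Omega=B_R$ be the ball of radius $R$ centered at the origin. Let $g(x',x'')=|x''|$ and let $u_0\in C(\overline\Omega)$ satisfy $u_0>0$ in $\Omega$ and $u_0=g$ on $\partial\Omega$. Let $z$ be the viscosity solution of $\lambda_j(D^2z)=0$ in $\Omega$, $z=g$ on $\partial\Omega$, and $u$ the viscosity solution of $u_t-\lambda_j(D^2u)=0$ in $\Omega\times(0,\infty)$, $u=g$ on $\partial\Omega\times(0,\infty)$, $u(\cdot,0)=u_0$. Then $z=0$ on $\Omega\cap\{x''=0\}$, and for every $x_0\in\Omega\cap\{x''=0\}$ and every $t>0$ one has $u(x_0,t)>0=z(x_0)$.
   Context: $\lambda_j(A)$ is the $j$-th smallest eigenvalue of a symmetric $N\times N$ matrix $A$, $\lambda_j(A)=\inf_{\dim S=j}\sup_{v\in S,|v|=1}\langle Av,v\rangle$. Solutions are viscosity solutions continuous up to the boundary and attaining the data pointwise. *)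

theory Defs
  imports "HOL-Analysis.Analysis"
begin

text \<open>j-th smallest eigenvalue of a (symmetric) matrix, via the Courant--Fischer min-max formula
  lambda_j(A) = inf over j-dimensional subspaces S of sup over unit v in S of (A v, v).\<close>
definition eig_j :: "nat \<Rightarrow> real^'n^'n \<Rightarrow> real" where
  "eig_j j A = Inf {Sup {v \<bullet> (A *v v) | v. v \<in> S \<and> norm v = 1} | S. subspace S \<and> dim S = j}"

definition C2_data :: "(real^'n) set \<Rightarrow> (real^'n \<Rightarrow> real) \<Rightarrow> (real^'n \<Rightarrow> real^'n)
    \<Rightarrow> (real^'n \<Rightarrow> real^'n^'n) \<Rightarrow> bool" where
  "C2_data U \<phi> G H \<longleftrightarrow> open U \<and>
     (\<forall>x\<in>U. (\<phi> has_derivative (\<lambda>h. G x \<bullet> h)) (at x)) \<and>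
     (\<forall>x\<in>U. (G has_derivative (\<lambda>h. H x *v h)) (at x)) \<and>
     continuous_on U H"

definition C21_data :: "((real^'n) \<times> real) set \<Rightarrow> ((real^'n) \<times> real \<Rightarrow> real) \<Rightarrow> ((real^'n) \<times> real \<Rightarrow> real^'n)
    \<Rightarrow> ((real^'n) \<times> real \<Rightarrow> real) \<Rightarrow> ((real^'n) \<times> real \<Rightarrow> real^'n^'n) \<Rightarrow> bool" where
  "C21_data U \<phi> G T H \<longleftrightarrow> open U \<and>
     (\<forall>p\<in>U. (\<phi> has_derivative (\<lambda>(h,s). G p \<bullet> h + T p * s)) (at p)) \<and>
     (\<forall>p\<in>U. ((\<lambda>y. G (y, snd p)) has_derivative (\<lambda>h. H p *v h)) (at (fst p))) \<and>
     continuous_on U G \<and> continuous_on U T \<and> continuous_on U H"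

text \<open>Viscosity solution of lambda_j(D^2 z) = 0 in the open set Omega
  (written as the degenerate elliptic equation -lambda_j(D^2 z) = 0).\<close>
definition visc_sol_ell :: "nat \<Rightarrow> (real^'n) set \<Rightarrow> (real^'n \<Rightarrow> real) \<Rightarrow> bool" where
  "visc_sol_ell j \<Omega> z \<longleftrightarrow> continuous_on \<Omega> z \<and>
     (\<forall>x0\<in>\<Omega>. \<forall>U \<phi> G H. C2_data U \<phi> G H \<and> x0 \<in> U \<and>
        (\<exists>e>0. \<forall>x\<in>\<Omega> \<inter> ball x0 e. z x - \<phi> x \<le> z x0 - \<phi> x0)
        \<longrightarrow> eig_j j (H x0) \<ge> 0) \<and>
     (\<forall>x0\<in>\<Omega>. \<forall>U \<phi> G H. C2_data U \<phi> G H \<and> x0 \<in> U \<and>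
        (\<exists>e>0. \<forall>x\<in>\<Omega> \<inter> ball x0 e. z x - \<phi> x \<ge> z x0 - \<phi> x0)
        \<longrightarrow> eig_j j (H x0) \<le> 0)"

definition visc_sol_par :: "nat \<Rightarrow> ((real^'n) \<times> real) set \<Rightarrow> ((real^'n) \<times> real \<Rightarrow> real) \<Rightarrow> bool" where
  "visc_sol_par j Q u \<longleftrightarrow> continuous_on Q u \<and>
     (\<forall>p0\<in>Q. \<forall>U \<phi> G T H. C21_data U \<phi> G T H \<and> p0 \<in> U \<and>
        (\<exists>e>0. \<forall>p\<in>Q \<inter> ball p0 e. u p - \<phi> p \<le> u p0 - \<phi> p0)
        \<longrightarrow> T p0 - eig_j j (H p0) \<le> 0) \<and>
     (\<forall>p0\<in>Q. \<forall>U \<phi> G T H. C21_data U \<phi> G T H \<and> p0 \<in> U \<and>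
        (\<exists>e>0. \<forall>p\<in>Q \<inter> ball p0 e. u p - \<phi> p \<ge> u p0 - \<phi> p0)
        \<longrightarrow> T p0 - eig_j j (H p0) \<ge> 0)"

text \<open>|x''|: Euclidean norm of the coordinates of x outside the index set J (J = coordinates of x').\<close>
definition norm_out :: "'n set \<Rightarrow> real^'n \<Rightarrow> real" where
  "norm_out J x = sqrt (\<Sum>i\<in>UNIV - J. (x $ i)^2)"

end

theory Submission
  imports Defs
begin

text \<open>Everything follows by comparison with explicit classical test functions. For \<open>z\<close>:
  \<open>\<epsilon> (|x|\<^sup>2 - R\<^sup>2)\<close> is a strict subsolution below the boundary data, so \<open>z \<ge> 0\<close>; and
  \<open>|x''|\<^sup>2 / (4 \<delta>) - b |x|\<^sup>2 + b R\<^sup>2 + \<delta>\<close> lies above \<open>|x''|\<close> on the sphere and is a strict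
  supersolution, since its Hessian is \<open>-2 b\<close> on the \<open>j\<close>-dimensional space \<open>{x'' = 0}\<close>; hence
  \<open>z \<le> b R\<^sup>2 + \<delta>\<close> on \<open>{x'' = 0}\<close>. For \<open>u\<close>: comparison with \<open>0\<close> gives \<open>u \<ge> 0\<close>, and for
  \<open>|x\<^sub>0|\<^sup>2 < q < R\<^sup>2\<close> and small \<open>K\<close> the barrier \<open>K exp (-12 t / q) (|x'|\<^sup>2 - q) (|x'|\<^sup>2 - 3 q)\<close> lies
  below \<open>u\<close> on the parabolic boundary and is a subsolution where it is positive: there every
  \<open>j\<close>-dimensional subspace contains a unit vector whose \<open>x'\<close>-part is parallel to \<open>x'\<close>, which
  bounds the \<open>j\<close>-th eigenvalue of its Hessian from below. So \<open>u (x\<^sub>0, t)\<close> exceeds the barrier,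
  which is positive at \<open>x\<^sub>0\<close>.\<close>

section \<open>Min-max bounds for the \<open>j\<close>-th eigenvalue\<close>

lemma unit_quadratic_form_bounded:
  fixes A :: "real^'n^'n"
  obtains C where "\<And>v. norm v = 1 \<Longrightarrow> \<bar>v \<bullet> (A *v v)\<bar> \<le> C"
proof -
  obtain K where K: "\<And>x. norm (A *v x) \<le> norm x * K"
    using bounded_linear.bounded[OF matrix_vector_mul_bounded_linear[of A]] by blast
  have "\<bar>v \<bullet> (A *v v)\<bar> \<le> K" if "norm v = 1" for v
    using Cauchy_Schwarz_ineq2[of v "A *v v"] K[of v] \<open>norm v = 1\<close> by simp
  then show ?thesis by (rule that)
qed

lemma subspace_has_unit_vector:
  fixes S :: "'a::euclidean_space set"
  assumes "subspace S" "1 \<le> dim S"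
  obtains v where "v \<in> S" "norm v = 1"
proof -
  obtain w where w: "w \<in> S" "w \<noteq> 0"
    using assms(2) dim_eq_0[of S] by fastforce
  show ?thesis
  proof
    show "(1 / norm w) *\<^sub>R w \<in> S" using w assms(1) subspace_scale by blast
    show "norm ((1 / norm w) *\<^sub>R w) = 1" using w by simp
  qed
qed

lemma exists_orthogonal_in_larger_subspace:
  fixes S W :: "'a::euclidean_space set"
  assumes "subspace S" "subspace W" "dim W < dim S"
  obtains v where "v \<in> S" "v \<noteq> 0" "\<And>w. w \<in> W \<Longrightarrow> v \<bullet> w = 0"
proof -
  define Wperp where "Wperp = {y \<in> UNIV. \<forall>x \<in> W. orthogonal x y}"
  have "subspace Wperp" unfolding Wperp_def using subspace_orthogonal_to_vectors by simp
  have "dim Wperp + dim W = dim (UNIV :: 'a set)"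
    unfolding Wperp_def by (rule dim_subspace_orthogonal_to_vectors) (use assms in auto)
  moreover have "dim {x + y |x y. x \<in> S \<and> y \<in> Wperp} + dim (S \<inter> Wperp) = dim S + dim Wperp"
    by (rule dim_sums_Int) (use assms \<open>subspace Wperp\<close> in auto)
  moreover have "dim {x + y |x y. x \<in> S \<and> y \<in> Wperp} \<le> dim (UNIV :: 'a set)"
    by (rule dim_subset) auto
  ultimately have "\<not> S \<inter> Wperp \<subseteq> {0}"
    using assms(3) dim_eq_0[of "S \<inter> Wperp"] by linarith
  then show ?thesis
    using that unfolding Wperp_def orthogonal_def by (auto simp: inner_commute)
qed

definition rayleigh_values :: "real^'n^'n \<Rightarrow> (real^'n) set \<Rightarrow> real set" where
  "rayleigh_values A S = {v \<bullet> (A *v v) | v. v \<in> S \<and> norm v = 1}"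

lemma eig_j_eq_Inf_Sup_rayleigh_values:
  "eig_j j A = Inf {Sup (rayleigh_values A S) | S. subspace S \<and> dim S = j}"
  by (simp add: eig_j_def rayleigh_values_def)

lemma rayleigh_value_le_Sup:
  assumes "v \<in> S" "norm v = 1"
  shows "v \<bullet> (A *v v) \<le> Sup (rayleigh_values A S)"
proof (rule cSup_upper)
  show "v \<bullet> (A *v v) \<in> rayleigh_values A S"
    using assms unfolding rayleigh_values_def by blast
  obtain C where "\<And>v. norm v = 1 \<Longrightarrow> \<bar>v \<bullet> (A *v v)\<bar> \<le> C"
    using unit_quadratic_form_bounded[of A] by blast
  then show "bdd_above (rayleigh_values A S)"
    unfolding rayleigh_values_def bdd_above_def by (fastforce simp: abs_le_iff)
qed

lemma eig_j_le_if_subspace: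
  fixes A :: "real^'n^'n"
  assumes "1 \<le> j" "subspace S" "dim S = j"
    and "\<And>v. v \<in> S \<Longrightarrow> norm v = 1 \<Longrightarrow> v \<bullet> (A *v v) \<le> m"
  shows "eig_j j A \<le> m"
proof -
  obtain C where C: "\<And>v. norm v = 1 \<Longrightarrow> \<bar>v \<bullet> (A *v v)\<bar> \<le> C"
    using unit_quadratic_form_bounded[of A] by blast
  have "-C \<le> Sup (rayleigh_values A T)" if T: "subspace T" "dim T = j" for T
  proof -
    obtain v where v: "v \<in> T" "norm v = 1"
      using subspace_has_unit_vector T assms(1) by metis
    show ?thesis using C[OF v(2)] rayleigh_value_le_Sup[OF v, of A] by linarith
  qed
  then have "bdd_below {Sup (rayleigh_values A T) | T. subspace T \<and> dim T = j}"
    unfolding bdd_below_def by blast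
  then have "eig_j j A \<le> Sup (rayleigh_values A S)"
    unfolding eig_j_eq_Inf_Sup_rayleigh_values using assms(2,3) by (intro cInf_lower) auto
  also have "\<dots> \<le> m"
  proof (rule cSup_least)
    obtain v where "v \<in> S" "norm v = 1"
      using subspace_has_unit_vector assms(1-3) by metis
    then show "rayleigh_values A S \<noteq> {}" unfolding rayleigh_values_def by blast
    show "r \<le> m" if "r \<in> rayleigh_values A S" for r
      using that assms(4) unfolding rayleigh_values_def by blast
  qed
  finally show ?thesis .
qed

lemma eig_j_ge_if_subspaces:
  fixes A :: "real^'n^'n"
  assumes "j \<le> CARD('n)"
    and "\<And>S. subspace S \<Longrightarrow> dim S = j \<Longrightarrow> \<exists>v\<in>S. norm v = 1 \<and> m \<le> v \<bullet> (A *v v)"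
  shows "m \<le> eig_j j A"
  unfolding eig_j_eq_Inf_Sup_rayleigh_values
proof (rule cInf_greatest)
  obtain T :: "(real^'n) set" where "subspace T" "dim T = j"
    using choose_subspace_of_subspace[of j "UNIV :: (real^'n) set"] assms(1) by auto
  then show "{Sup (rayleigh_values A S) |S. subspace S \<and> dim S = j} \<noteq> {}" by blast
next
  fix r assume "r \<in> {Sup (rayleigh_values A S) |S. subspace S \<and> dim S = j}"
  then obtain S where S: "subspace S" "dim S = j" "r = Sup (rayleigh_values A S)" by blast
  then obtain v where "v \<in> S" "norm v = 1" "m \<le> v \<bullet> (A *v v)" using assms(2) by blast
  then show "m \<le> r" using rayleigh_value_le_Sup[of v S A] S(3) by linarith
qed

lemma eig_j_ge_if_unit_quadratic_form_ge:
  fixes A :: "real^'n^'n"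
  assumes "1 \<le> j" "j \<le> CARD('n)" "\<And>v. norm v = 1 \<Longrightarrow> m \<le> v \<bullet> (A *v v)"
  shows "m \<le> eig_j j A"
proof (rule eig_j_ge_if_subspaces[OF assms(2)])
  fix S :: "(real^'n) set" assume "subspace S" "dim S = j"
  then obtain v where "v \<in> S" "norm v = 1" using subspace_has_unit_vector assms(1) by metis
  then show "\<exists>v\<in>S. norm v = 1 \<and> m \<le> v \<bullet> (A *v v)" using assms(3) by blast
qed

section \<open>Coordinate projections\<close>

definition coord_proj :: "'n set \<Rightarrow> real^'n \<Rightarrow> real^'n" where
  "coord_proj J x = (\<chi> i. if i \<in> J then x$i else 0)"

lemma linear_coord_proj: "linear (coord_proj J)"
  by (rule linearI) (auto simp: coord_proj_def vec_eq_iff)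

lemma bounded_linear_coord_proj: "bounded_linear (coord_proj J)"
  using linear_coord_proj linear_conv_bounded_linear by blast

lemma has_derivative_coord_proj: "(coord_proj J has_derivative coord_proj J) F"
  using bounded_linear_coord_proj by (rule bounded_linear_imp_has_derivative)

lemma continuous_on_coord_proj [continuous_intros]:
  "continuous_on S f \<Longrightarrow> continuous_on S (\<lambda>x. coord_proj J (f x))"
  using continuous_on_compose[of S f "coord_proj J"] linear_continuous_on[OF bounded_linear_coord_proj]
  by (simp add: comp_def) blast

lemma coord_proj_diff: "coord_proj J (x - y) = coord_proj J x - coord_proj J y"
  and coord_proj_scaleR: "coord_proj J (c *\<^sub>R x) = c *\<^sub>R coord_proj J x"
  and coord_proj_idem [simp]: "coord_proj J (coord_proj J x) = coord_proj J x"
  and coord_proj_UNIV [simp]: "coord_proj UNIV x = x"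
  and coord_proj_add_compl: "coord_proj J x + coord_proj (-J) x = x"
  by (simp_all add: coord_proj_def vec_eq_iff)

lemma inner_coord_proj_commute: "x \<bullet> coord_proj J y = coord_proj J x \<bullet> y"
  unfolding inner_vec_def coord_proj_def by (intro sum.cong) auto

definition coord_sqnorm :: "'n set \<Rightarrow> real^'n \<Rightarrow> real" where
  "coord_sqnorm J x = x \<bullet> coord_proj J x"

lemma coord_sqnorm_eq_norm_proj: "coord_sqnorm J x = (norm (coord_proj J x))^2"
  using inner_coord_proj_commute[of x J "coord_proj J x"]
  by (simp add: coord_sqnorm_def power2_norm_eq_inner)

lemma coord_sqnorm_nonneg: "0 \<le> coord_sqnorm J x"
  by (simp add: coord_sqnorm_eq_norm_proj)

lemma inner_self_eq_coord_sqnorm_add_compl: "x \<bullet> x = coord_sqnorm J x + coord_sqnorm (-J) x"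
proof -
  have "x \<bullet> x = x \<bullet> (coord_proj J x + coord_proj (-J) x)"
    by (simp only: coord_proj_add_compl)
  then show ?thesis by (simp only: inner_add_right coord_sqnorm_def)
qed

lemma coord_sqnorm_le_inner_self: "coord_sqnorm J x \<le> x \<bullet> x"
  using inner_self_eq_coord_sqnorm_add_compl[of x J] coord_sqnorm_nonneg[of "-J" x] by linarith

lemma norm_out_eq_sqrt_coord_sqnorm: "norm_out J x = sqrt (coord_sqnorm (-J) x)"
proof -
  have "coord_sqnorm (-J) x = (\<Sum>i\<in>UNIV. if i \<in> UNIV - J then (x$i)^2 else 0)"
    unfolding coord_sqnorm_def inner_vec_def coord_proj_def
    by (intro sum.cong) (auto simp: power2_eq_square)
  also have "\<dots> = (\<Sum>i\<in>UNIV - J. (x$i)^2)"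
    by (simp add: sum.If_cases set_diff_eq)
  finally show ?thesis unfolding norm_out_def by simp
qed

lemma continuous_on_coord_sqnorm [continuous_intros]:
  "continuous_on S f \<Longrightarrow> continuous_on S (\<lambda>x. coord_sqnorm J (f x))"
  unfolding coord_sqnorm_def by (intro continuous_intros)

lemma has_derivative_coord_sqnorm:
  "(coord_sqnorm J has_derivative (\<lambda>h. 2 * (coord_proj J x \<bullet> h))) (at x within S)"
proof -
  have "(coord_sqnorm J has_derivative (\<lambda>h. x \<bullet> coord_proj J h + h \<bullet> coord_proj J x)) (at x within S)"
    unfolding coord_sqnorm_def[abs_def]
    by (rule has_derivative_inner[OF has_derivative_ident has_derivative_coord_proj])
  moreover have "x \<bullet> coord_proj J h + h \<bullet> coord_proj J x = 2 * (coord_proj J x \<bullet> h)" for h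
    using inner_coord_proj_commute[of x J h] inner_commute[of h "coord_proj J x"] by simp
  ultimately show ?thesis by simp
qed

definition rank_one_proj_mat :: "real \<Rightarrow> real^'n \<Rightarrow> real \<Rightarrow> 'n set \<Rightarrow> real \<Rightarrow> real^'n^'n" where
  "rank_one_proj_mat a y b J c =
     (\<chi> i k. a * y$i * y$k + (if i = k then (if i \<in> J then b else 0) + c else 0))"

lemma rank_one_proj_mat_mult:
  "rank_one_proj_mat a y b J c *v v = (a * (y \<bullet> v)) *\<^sub>R y + b *\<^sub>R coord_proj J v + c *\<^sub>R v"
proof -
  have "(rank_one_proj_mat a y b J c *v v) $ i
        = ((a * (y \<bullet> v)) *\<^sub>R y + b *\<^sub>R coord_proj J v + c *\<^sub>R v) $ i" for i
  proof -
    have "(rank_one_proj_mat a y b J c *v v) $ i = (\<Sum>k\<in>UNIV. a * y$i * y$k * v$k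
          + (if i = k then ((if i \<in> J then b else 0) + c) * v$k else 0))"
      unfolding rank_one_proj_mat_def matrix_vector_mult_def
      by (auto intro!: sum.cong simp: algebra_simps)
    also have "\<dots> = a * y$i * (\<Sum>k\<in>UNIV. y$k * v$k) + ((if i \<in> J then b else 0) + c) * v$i"
      by (simp add: sum.distrib sum_distrib_left algebra_simps)
    finally show ?thesis by (simp add: inner_vec_def coord_proj_def algebra_simps)
  qed
  then show ?thesis by (simp add: vec_eq_iff)
qed

lemma rank_one_proj_mat_quadratic_form:
  "v \<bullet> (rank_one_proj_mat a y b J c *v v) = a * (y \<bullet> v)^2 + b * coord_sqnorm J v + c * (norm v)^2"
proof -
  have "v \<bullet> v = (norm v)^2" by (simp add: power2_norm_eq_inner)
  then show ?thesis
    by (simp add: rank_one_proj_mat_mult inner_add_right coord_sqnorm_def power2_eq_square inner_commute)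
qed

definition coord_subspace :: "'n set \<Rightarrow> (real^'n) set" where
  "coord_subspace J = {x. \<forall>i. i \<notin> J \<longrightarrow> x$i = 0}"

lemma subspace_coord_subspace: "subspace (coord_subspace J)"
proof -
  have "vec.subspace (coord_subspace J)"
    unfolding coord_subspace_def by (rule subspace_substandard_cart)
  then show ?thesis by (simp add: subspace_vec_eq)
qed

lemma dim_coord_subspace: "dim (coord_subspace J) = card J"
proof -
  have "vec.dim (coord_subspace J) = card J"
    unfolding coord_subspace_def by (rule dim_substandard_cart)
  then show ?thesis by (simp add: dim_vec_eq)
qed

lemma coord_subspace_iff: "x \<in> coord_subspace J \<longleftrightarrow> coord_proj J x = x"
  unfolding coord_subspace_def coord_proj_def by (auto simp: vec_eq_iff)

lemma card_le_CARD: "card (J :: 'n::finite set) \<le> CARD('n)"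
  by (rule card_mono) auto

lemma eig_j_rank_one_proj_mat_compl_le:
  fixes J :: "'n::finite set"
  assumes "1 \<le> card J"
  shows "eig_j (card J) (rank_one_proj_mat 0 0 a (-J) c) \<le> c"
proof (rule eig_j_le_if_subspace[OF assms subspace_coord_subspace dim_coord_subspace])
  fix v :: "real^'n" assume "v \<in> coord_subspace J" "norm v = 1"
  moreover from this have "coord_proj (-J) v = 0"
    unfolding coord_subspace_def coord_proj_def by (auto simp: vec_eq_iff)
  ultimately show "v \<bullet> (rank_one_proj_mat 0 0 a (- J) c *v v) \<le> c"
    by (simp add: rank_one_proj_mat_quadratic_form coord_sqnorm_def)
qed

text \<open>A unit vector of \<open>S\<close> orthogonal to the \<open>(card J - 1)\<close>-dimensional space
  \<open>{w \<in> coord_subspace J. y \<bullet> w = 0}\<close> has its \<open>J\<close>-part parallel to \<open>y\<close>.\<close>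
lemma subspace_has_unit_vector_with_parallel_proj:
  fixes J :: "'n::finite set" and y :: "real^'n"
  assumes S: "subspace S" "dim S = card J" and J: "1 \<le> card J" and y: "coord_proj J y = y"
  obtains v where "v \<in> S" "norm v = 1" "(y \<bullet> v)^2 = (y \<bullet> y) * coord_sqnorm J v"
proof (cases "y = 0")
  case True
  then show ?thesis using subspace_has_unit_vector[OF S(1)] S(2) J that by force
next
  case False
  define W where "W = {w \<in> coord_subspace J. y \<bullet> w = 0}"
  have "subspace W"
    using subspace_coord_subspace[of J] unfolding W_def subspace_def by (auto simp: inner_add_right)
  moreover have "y \<in> coord_subspace J" "y \<notin> W"
    using y False unfolding W_def by (auto simp: coord_subspace_iff)
  ultimately have "W \<subset> coord_subspace J" unfolding W_def by blast
  then have "dim W < dim (coord_subspace J)"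
    using dim_psubset span_eq_iff \<open>subspace W\<close> subspace_coord_subspace by metis
  then obtain v0 where v0: "v0 \<in> S" "v0 \<noteq> 0" "\<And>w. w \<in> W \<Longrightarrow> v0 \<bullet> w = 0"
    using exists_orthogonal_in_larger_subspace[OF S(1) \<open>subspace W\<close>] S(2) dim_coord_subspace
    by metis
  define v where "v = (1 / norm v0) *\<^sub>R v0"
  have v: "v \<in> S" "norm v = 1" "\<And>w. w \<in> W \<Longrightarrow> v \<bullet> w = 0"
    unfolding v_def using v0 S(1) subspace_scale by auto
  define r where "r = y \<bullet> y"
  have "r \<noteq> 0" using False unfolding r_def by simp
  have "y \<bullet> coord_proj J v = y \<bullet> v"
    using inner_coord_proj_commute[of y J v] y by simp
  then have "coord_proj J v - ((y \<bullet> v) / r) *\<^sub>R y \<in> W"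
    using y \<open>r \<noteq> 0\<close> unfolding W_def r_def
    by (auto simp: coord_subspace_iff coord_proj_diff coord_proj_scaleR inner_diff_right)
  then have "v \<bullet> (coord_proj J v - ((y \<bullet> v) / r) *\<^sub>R y) = 0"
    by (rule v(3))
  then have "v \<bullet> coord_proj J v - (y \<bullet> v) / r * (v \<bullet> y) = 0"
    by (simp add: inner_diff_right)
  then have "(y \<bullet> v)^2 = r * coord_sqnorm J v"
    using \<open>r \<noteq> 0\<close> by (simp add: coord_sqnorm_def inner_commute field_simps power2_eq_square)
  then show ?thesis using that v(1,2) unfolding r_def by blast
qed

lemma eig_j_barrier_hessian_ge:
  fixes J :: "'n::finite set" and y :: "real^'n"
  assumes J: "1 \<le> card J" and c: "0 \<le> c" and y: "coord_proj J y = y"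
  shows "c * min (12 * (y \<bullet> y) - 8 * q) 0
           \<le> eig_j (card J) (rank_one_proj_mat (8 * c) y (c * (4 * (y \<bullet> y) - 8 * q)) J 0)"
proof (rule eig_j_ge_if_subspaces[OF card_le_CARD])
  fix S :: "(real^'n) set" assume "subspace S" "dim S = card J"
  then obtain v where v: "v \<in> S" "norm v = 1" "(y \<bullet> v)^2 = (y \<bullet> y) * coord_sqnorm J v"
    using subspace_has_unit_vector_with_parallel_proj J y by metis
  define m where "m = 12 * (y \<bullet> y) - 8 * q"
  define s where "s = coord_sqnorm J v"
  have s: "0 \<le> s" "s \<le> 1"
    using coord_sqnorm_nonneg coord_sqnorm_le_inner_self[of J v] v(2)
    unfolding s_def by (auto simp: dot_square_norm)
  have "min m 0 \<le> s * m"
  proof (cases "0 \<le> m")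
    case False
    then show ?thesis using mult_right_mono_neg[OF s(2), of m] by simp
  qed (use s in simp)
  moreover have "v \<bullet> (rank_one_proj_mat (8 * c) y (c * (4 * (y \<bullet> y) - 8 * q)) J 0 *v v) = c * (s * m)"
    unfolding rank_one_proj_mat_quadratic_form v(3) s_def m_def by (simp add: algebra_simps)
  ultimately show "\<exists>v\<in>S. norm v = 1 \<and> c * min (12 * (y \<bullet> y) - 8 * q) 0
      \<le> v \<bullet> (rank_one_proj_mat (8 * c) y (c * (4 * (y \<bullet> y) - 8 * q)) J 0 *v v)"
    using v(1,2) c unfolding m_def by (metis mult_left_mono)
qed

section \<open>Test functions\<close>

lemma C2_data_quadratic:
  "C2_data UNIV (\<lambda>x. \<alpha> * coord_sqnorm A x + \<gamma> * (x \<bullet> x) + \<kappa>)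
     (\<lambda>x. (2 * \<alpha>) *\<^sub>R coord_proj A x + (2 * \<gamma>) *\<^sub>R x) (\<lambda>_. rank_one_proj_mat 0 0 (2 * \<alpha>) A (2 * \<gamma>))"
  unfolding C2_data_def
proof (intro conjI ballI)
  fix x :: "real^'a"
  have "((\<lambda>x. x \<bullet> x) has_derivative (\<lambda>h. 2 * (x \<bullet> h))) (at x)"
    using has_derivative_coord_sqnorm[of UNIV x UNIV] by (simp add: coord_sqnorm_def[abs_def])
  then have "((\<lambda>x. \<alpha> * coord_sqnorm A x + \<gamma> * (x \<bullet> x) + \<kappa>) has_derivative
        (\<lambda>h. \<alpha> * (2 * (coord_proj A x \<bullet> h)) + \<gamma> * (2 * (x \<bullet> h)) + 0)) (at x)"
    by (intro has_derivative_add has_derivative_mult_right has_derivative_coord_sqnorm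
        has_derivative_const)
  moreover have "(\<lambda>h. \<alpha> * (2 * (coord_proj A x \<bullet> h)) + \<gamma> * (2 * (x \<bullet> h)) + 0)
      = (\<lambda>h. ((2 * \<alpha>) *\<^sub>R coord_proj A x + (2 * \<gamma>) *\<^sub>R x) \<bullet> h)"
    by (rule ext) (simp add: inner_add_left)
  ultimately show "((\<lambda>x. \<alpha> * coord_sqnorm A x + \<gamma> * (x \<bullet> x) + \<kappa>) has_derivative
        (\<lambda>h. ((2 * \<alpha>) *\<^sub>R coord_proj A x + (2 * \<gamma>) *\<^sub>R x) \<bullet> h)) (at x)"
    by simp
  have "((\<lambda>x. (2 * \<alpha>) *\<^sub>R coord_proj A x + (2 * \<gamma>) *\<^sub>R x) has_derivative
        (\<lambda>h. (2 * \<alpha>) *\<^sub>R coord_proj A h + (2 * \<gamma>) *\<^sub>R h)) (at x)"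
    by (intro has_derivative_add has_derivative_scaleR_right has_derivative_coord_proj
        has_derivative_ident)
  then show "((\<lambda>x. (2 * \<alpha>) *\<^sub>R coord_proj A x + (2 * \<gamma>) *\<^sub>R x) has_derivative
        (\<lambda>h. rank_one_proj_mat 0 0 (2 * \<alpha>) A (2 * \<gamma>) *v h)) (at x)"
    by (simp add: rank_one_proj_mat_mult)
qed auto

lemma C21_data_zero: "C21_data UNIV (\<lambda>_. 0) (\<lambda>_. 0) (\<lambda>_. 0) (\<lambda>_. 0)"
  by (simp add: C21_data_def case_prod_unfold)

lemma C21_data_minus_time_blowup:
  fixes \<psi> :: "(real^'n) \<times> real \<Rightarrow> real"
  assumes C: "C21_data UNIV \<psi> G T H"
  shows "C21_data (UNIV \<times> {..<Tm}) (\<lambda>p. \<psi> p - \<epsilon> / (Tm - snd p)) G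
           (\<lambda>p. T p - \<epsilon> / (Tm - snd p)^2) H"
  unfolding C21_data_def
proof (intro conjI ballI)
  show "open (UNIV \<times> {..<Tm} :: ((real^'n) \<times> real) set)"
    by (intro open_Times) auto
  fix p :: "(real^'n) \<times> real" assume "p \<in> UNIV \<times> {..<Tm}"
  then have "snd p < Tm" by auto
  have "((\<lambda>t. \<epsilon> / (Tm - t)) has_real_derivative (\<epsilon> / (Tm - snd p)^2)) (at (snd p))"
    using \<open>snd p < Tm\<close> by (auto intro!: derivative_eq_intros simp: power2_eq_square field_simps)
  from DERIV_compose_FDERIV[OF this has_derivative_snd[OF has_derivative_ident]]
  have "((\<lambda>p. \<epsilon> / (Tm - snd p)) has_derivative (\<lambda>hs. snd hs * (\<epsilon> / (Tm - snd p)^2))) (at p)"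
    by simp
  from has_derivative_diff[OF _ this]
  have "((\<lambda>p. \<psi> p - \<epsilon> / (Tm - snd p)) has_derivative
          (\<lambda>hs. (\<lambda>(h,s). G p \<bullet> h + T p * s) hs - snd hs * (\<epsilon> / (Tm - snd p)^2))) (at p)"
    using C unfolding C21_data_def by blast
  moreover have "(\<lambda>hs. (\<lambda>(h,s). G p \<bullet> h + T p * s) hs - snd hs * (\<epsilon> / (Tm - snd p)^2))
     = (\<lambda>(h,s). G p \<bullet> h + (T p - \<epsilon> / (Tm - snd p)^2) * s)"
    by (auto simp: algebra_simps)
  ultimately show "((\<lambda>p. \<psi> p - \<epsilon> / (Tm - snd p)) has_derivative
      (\<lambda>(h,s). G p \<bullet> h + (T p - \<epsilon> / (Tm - snd p)^2) * s)) (at p)"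
    by simp
  show "((\<lambda>y. G (y, snd p)) has_derivative (\<lambda>h. H p *v h)) (at (fst p))"
    using C unfolding C21_data_def by blast
next
  show "continuous_on (UNIV \<times> {..<Tm}) G" "continuous_on (UNIV \<times> {..<Tm}) H"
    using C unfolding C21_data_def by (auto intro: continuous_on_subset)
  have "continuous_on (UNIV \<times> {..<Tm}) T"
    using C unfolding C21_data_def by (auto intro: continuous_on_subset)
  then show "continuous_on (UNIV \<times> {..<Tm}) (\<lambda>p. T p - \<epsilon> / (Tm - snd p)^2)"
    by (intro continuous_intros) auto
qed

definition barrier_profile :: "real \<Rightarrow> real \<Rightarrow> real" where
  "barrier_profile q r = (r - q) * (r - 3 * q)"

definition barrier :: "real \<Rightarrow> real \<Rightarrow> real \<Rightarrow> 'n set \<Rightarrow> (real^'n) \<times> real \<Rightarrow> real" where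
  "barrier K \<mu> q J p = K * exp (-\<mu> * snd p) * barrier_profile q (coord_sqnorm J (fst p))"

definition barrier_grad :: "real \<Rightarrow> real \<Rightarrow> real \<Rightarrow> 'n set \<Rightarrow> (real^'n) \<times> real \<Rightarrow> real^'n" where
  "barrier_grad K \<mu> q J p =
     (K * exp (-\<mu> * snd p) * (4 * coord_sqnorm J (fst p) - 8 * q)) *\<^sub>R coord_proj J (fst p)"

definition barrier_hess :: "real \<Rightarrow> real \<Rightarrow> real \<Rightarrow> 'n set \<Rightarrow> (real^'n) \<times> real \<Rightarrow> real^'n^'n" where
  "barrier_hess K \<mu> q J p =
     rank_one_proj_mat (8 * K * exp (-\<mu> * snd p)) (coord_proj J (fst p))
       (K * exp (-\<mu> * snd p) * (4 * coord_sqnorm J (fst p) - 8 * q)) J 0"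

lemma has_derivative_barrier:
  "(barrier K \<mu> q J has_derivative
     (\<lambda>(h, s). barrier_grad K \<mu> q J p \<bullet> h + (-\<mu> * barrier K \<mu> q J p) * s)) (at p)"
proof -
  obtain x t where p: "p = (x, t)" by fastforce
  have "((\<lambda>p. coord_sqnorm J (fst p)) has_derivative
      (\<lambda>hs. 2 * (coord_proj J (fst p) \<bullet> fst hs))) (at p)"
    by (rule has_derivative_compose[OF has_derivative_fst[OF has_derivative_ident]
          has_derivative_coord_sqnorm])
  then have dr: "((\<lambda>p. coord_sqnorm J (fst p)) has_derivative
      (\<lambda>hs. 2 * (coord_proj J x \<bullet> fst hs))) (at p)"
    by (simp add: p)
  have "((\<lambda>p. -\<mu> * snd p) has_derivative (\<lambda>hs. -\<mu> * snd hs)) (at p)"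
    by (intro has_derivative_mult_right has_derivative_snd has_derivative_ident)
  from DERIV_compose_FDERIV[OF DERIV_exp this]
  have de: "((\<lambda>p. exp (-\<mu> * snd p)) has_derivative (\<lambda>hs. (-\<mu> * snd hs) * exp (-\<mu> * t))) (at p)"
    by (simp add: p)
  have "barrier K \<mu> q J = (\<lambda>p. K * (exp (-\<mu> * snd p) *
          ((coord_sqnorm J (fst p) - q) * (coord_sqnorm J (fst p) - 3 * q))))"
    by (rule ext) (simp add: barrier_def barrier_profile_def)
  moreover have "((\<lambda>p. K * (exp (-\<mu> * snd p) *
          ((coord_sqnorm J (fst p) - q) * (coord_sqnorm J (fst p) - 3 * q)))) has_derivative
     (\<lambda>hs. K * (exp (-\<mu> * snd p) * ((coord_sqnorm J (fst p) - q) * (2 * (coord_proj J x \<bullet> fst hs) - 0)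
        + (2 * (coord_proj J x \<bullet> fst hs) - 0) * (coord_sqnorm J (fst p) - 3 * q))
        + ((-\<mu> * snd hs) * exp (-\<mu> * t)) *
          ((coord_sqnorm J (fst p) - q) * (coord_sqnorm J (fst p) - 3 * q))))) (at p)"
    by (intro has_derivative_mult_right has_derivative_mult de has_derivative_diff dr
        has_derivative_const)
  moreover have "(\<lambda>hs. K * (exp (-\<mu> * snd p) * ((coord_sqnorm J (fst p) - q) * (2 * (coord_proj J x \<bullet> fst hs) - 0)
        + (2 * (coord_proj J x \<bullet> fst hs) - 0) * (coord_sqnorm J (fst p) - 3 * q))
        + ((-\<mu> * snd hs) * exp (-\<mu> * t)) *
          ((coord_sqnorm J (fst p) - q) * (coord_sqnorm J (fst p) - 3 * q))))
     = (\<lambda>(h, s). barrier_grad K \<mu> q J p \<bullet> h + (-\<mu> * barrier K \<mu> q J p) * s)"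
    by (auto simp: barrier_grad_def barrier_def barrier_profile_def p algebra_simps)
  ultimately show ?thesis by simp
qed

lemma has_derivative_barrier_grad:
  "((\<lambda>y. barrier_grad K \<mu> q J (y, t)) has_derivative (\<lambda>h. barrier_hess K \<mu> q J (x, t) *v h)) (at x)"
proof -
  define c where "c = K * exp (-\<mu> * t)"
  have "((\<lambda>y. (c * (4 * coord_sqnorm J y - 8 * q)) *\<^sub>R coord_proj J y) has_derivative
      (\<lambda>h. (c * (4 * coord_sqnorm J x - 8 * q)) *\<^sub>R coord_proj J h
         + (c * (4 * (2 * (coord_proj J x \<bullet> h)) - 0)) *\<^sub>R coord_proj J x)) (at x)"
    by (intro has_derivative_scaleR has_derivative_mult_right has_derivative_diff
        has_derivative_coord_sqnorm has_derivative_coord_proj has_derivative_const)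
  moreover have "(\<lambda>h. (c * (4 * coord_sqnorm J x - 8 * q)) *\<^sub>R coord_proj J h
         + (c * (4 * (2 * (coord_proj J x \<bullet> h)) - 0)) *\<^sub>R coord_proj J x)
      = (\<lambda>h. barrier_hess K \<mu> q J (x, t) *v h)"
    by (rule ext) (simp add: barrier_hess_def rank_one_proj_mat_mult c_def algebra_simps)
  ultimately show ?thesis by (simp add: barrier_grad_def c_def)
qed

lemma C21_data_barrier:
  "C21_data UNIV (barrier K \<mu> q J) (barrier_grad K \<mu> q J) (\<lambda>p. -\<mu> * barrier K \<mu> q J p)
     (barrier_hess K \<mu> q J)"
  unfolding C21_data_def
proof (intro conjI ballI)
  fix p
  show "(barrier K \<mu> q J has_derivative
      (\<lambda>(h, s). barrier_grad K \<mu> q J p \<bullet> h + (-\<mu> * barrier K \<mu> q J p) * s)) (at p)"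
    by (rule has_derivative_barrier)
  show "((\<lambda>y. barrier_grad K \<mu> q J (y, snd p)) has_derivative (\<lambda>h. barrier_hess K \<mu> q J p *v h))
      (at (fst p))"
    using has_derivative_barrier_grad[of K \<mu> q J "snd p" "fst p"] by simp
next
  show "continuous_on UNIV (barrier_grad K \<mu> q J)" unfolding barrier_grad_def
    by (intro continuous_intros)
  show "continuous_on UNIV (\<lambda>p. -\<mu> * barrier K \<mu> q J p)" unfolding barrier_def barrier_profile_def
    by (intro continuous_intros)
  show "continuous_on UNIV (barrier_hess K \<mu> q J)"
    unfolding barrier_hess_def rank_one_proj_mat_def
    apply (intro continuous_intros)
    subgoal for i k by (cases "i = k"; cases "i \<in> J") (auto intro!: continuous_intros)
    done
qed auto

section \<open>Comparison principles\<close>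

lemma C2_data_continuous_on: "C2_data UNIV \<psi> G H \<Longrightarrow> continuous_on S \<psi>"
  unfolding C2_data_def
  by (meson UNIV_I continuous_at_imp_continuous_on has_derivative_continuous)

lemma C21_data_continuous_on: "C21_data UNIV \<psi> G T H \<Longrightarrow> continuous_on S \<psi>"
  unfolding C21_data_def
  by (meson UNIV_I continuous_at_imp_continuous_on has_derivative_continuous)

lemma closure_minus_frontier_open: "open \<Omega> \<Longrightarrow> x \<in> closure \<Omega> \<Longrightarrow> x \<notin> frontier \<Omega> \<Longrightarrow> x \<in> \<Omega>"
  by (simp add: frontier_def interior_open)

lemma visc_sol_ell_at_local_min:
  assumes "visc_sol_ell j \<Omega> z" "x0 \<in> \<Omega>" "C2_data U \<phi> G H" "x0 \<in> U" "0 < e"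
    and "\<And>x. x \<in> \<Omega> \<inter> ball x0 e \<Longrightarrow> z x0 - \<phi> x0 \<le> z x - \<phi> x"
  shows "eig_j j (H x0) \<le> 0"
proof -
  have "\<forall>x0\<in>\<Omega>. \<forall>U \<phi> G H. C2_data U \<phi> G H \<and> x0 \<in> U \<and>
        (\<exists>e>0. \<forall>x\<in>\<Omega> \<inter> ball x0 e. z x - \<phi> x \<ge> z x0 - \<phi> x0) \<longrightarrow> eig_j j (H x0) \<le> 0"
    using assms(1) unfolding visc_sol_ell_def by (elim conjE)
  then show ?thesis using assms(2-6) by blast
qed

lemma visc_sol_ell_at_local_max:
  assumes "visc_sol_ell j \<Omega> z" "x0 \<in> \<Omega>" "C2_data U \<phi> G H" "x0 \<in> U" "0 < e"
    and "\<And>x. x \<in> \<Omega> \<inter> ball x0 e \<Longrightarrow> z x - \<phi> x \<le> z x0 - \<phi> x0"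
  shows "0 \<le> eig_j j (H x0)"
proof -
  have "\<forall>x0\<in>\<Omega>. \<forall>U \<phi> G H. C2_data U \<phi> G H \<and> x0 \<in> U \<and>
        (\<exists>e>0. \<forall>x\<in>\<Omega> \<inter> ball x0 e. z x - \<phi> x \<le> z x0 - \<phi> x0) \<longrightarrow> eig_j j (H x0) \<ge> 0"
    using assms(1) unfolding visc_sol_ell_def by (elim conjE)
  then show ?thesis using assms(2-6) by blast
qed

lemma visc_sol_ell_ge_strict_subsolution:
  fixes z \<psi> :: "real^'n \<Rightarrow> real"
  assumes \<Omega>: "open \<Omega>" "bounded \<Omega>"
    and sol: "visc_sol_ell j \<Omega> z" and cz: "continuous_on (closure \<Omega>) z"
    and C: "C2_data UNIV \<psi> G H" and bd: "\<And>x. x \<in> frontier \<Omega> \<Longrightarrow> \<psi> x \<le> z x"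
    and strict: "\<And>x. x \<in> \<Omega> \<Longrightarrow> 0 < eig_j j (H x)"
    and x: "x \<in> closure \<Omega>"
  shows "\<psi> x \<le> z x"
proof (rule ccontr)
  assume "\<not> \<psi> x \<le> z x"
  have cont: "continuous_on (closure \<Omega>) (\<lambda>x. z x - \<psi> x)"
    using cz C2_data_continuous_on[OF C] by (intro continuous_intros) auto
  have "compact (closure \<Omega>)" "closure \<Omega> \<noteq> {}" using \<Omega>(2) x by (auto simp: compact_closure)
  from continuous_attains_inf[OF this cont]
  obtain xm where xm: "xm \<in> closure \<Omega>" "\<And>y. y \<in> closure \<Omega> \<Longrightarrow> z xm - \<psi> xm \<le> z y - \<psi> y"
    by auto
  have "z xm - \<psi> xm < 0" using xm(2)[OF x] \<open>\<not> \<psi> x \<le> z x\<close> by linarith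
  then have "xm \<notin> frontier \<Omega>" using bd by force
  with xm(1) have "xm \<in> \<Omega>" by (rule closure_minus_frontier_open[OF \<Omega>(1)])
  have "eig_j j (H xm) \<le> 0"
    using xm(2) closure_subset
    by (intro visc_sol_ell_at_local_min[OF sol \<open>xm \<in> \<Omega>\<close> C UNIV_I zero_less_one]) auto
  with strict[OF \<open>xm \<in> \<Omega>\<close>] show False by linarith
qed

lemma visc_sol_ell_le_strict_supersolution:
  fixes z \<psi> :: "real^'n \<Rightarrow> real"
  assumes \<Omega>: "open \<Omega>" "bounded \<Omega>"
    and sol: "visc_sol_ell j \<Omega> z" and cz: "continuous_on (closure \<Omega>) z"
    and C: "C2_data UNIV \<psi> G H" and bd: "\<And>x. x \<in> frontier \<Omega> \<Longrightarrow> z x \<le> \<psi> x"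
    and strict: "\<And>x. x \<in> \<Omega> \<Longrightarrow> eig_j j (H x) < 0"
    and x: "x \<in> closure \<Omega>"
  shows "z x \<le> \<psi> x"
proof (rule ccontr)
  assume "\<not> z x \<le> \<psi> x"
  have cont: "continuous_on (closure \<Omega>) (\<lambda>x. z x - \<psi> x)"
    using cz C2_data_continuous_on[OF C] by (intro continuous_intros) auto
  have "compact (closure \<Omega>)" "closure \<Omega> \<noteq> {}" using \<Omega>(2) x by (auto simp: compact_closure)
  from continuous_attains_sup[OF this cont]
  obtain xm where xm: "xm \<in> closure \<Omega>" "\<And>y. y \<in> closure \<Omega> \<Longrightarrow> z y - \<psi> y \<le> z xm - \<psi> xm"
    by auto
  have "0 < z xm - \<psi> xm" using xm(2)[OF x] \<open>\<not> z x \<le> \<psi> x\<close> by linarith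
  then have "xm \<notin> frontier \<Omega>" using bd by force
  with xm(1) have "xm \<in> \<Omega>" by (rule closure_minus_frontier_open[OF \<Omega>(1)])
  have "0 \<le> eig_j j (H xm)"
    using xm(2) closure_subset
    by (intro visc_sol_ell_at_local_max[OF sol \<open>xm \<in> \<Omega>\<close> C UNIV_I zero_less_one]) auto
  with strict[OF \<open>xm \<in> \<Omega>\<close>] show False by linarith
qed

text \<open>Test functions touch only on two-sided time neighbourhoods, so the parabolic comparison
  needs a minimum strictly before the final time; the penalty \<open>\<epsilon> / (Tm - t)\<close> provides one.\<close>
lemma time_blowup_penalty_attains_min:
  fixes f :: "'a::topological_space \<times> real \<Rightarrow> real"
  assumes S: "compact S" and f: "continuous_on (S \<times> {0..Tm}) f" and "0 < \<epsilon>"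
    and p0: "p0 \<in> S \<times> {0..<Tm}"
  obtains pm where "pm \<in> S \<times> {0..<Tm}"
    "\<And>p. p \<in> S \<times> {0..<Tm} \<Longrightarrow> f pm + \<epsilon> / (Tm - snd pm) \<le> f p + \<epsilon> / (Tm - snd p)"
proof -
  define F where "F p = f p + \<epsilon> / (Tm - snd p)" for p
  obtain pmin where "pmin \<in> S \<times> {0..Tm}" and pmin: "\<And>p. p \<in> S \<times> {0..Tm} \<Longrightarrow> f pmin \<le> f p"
    using continuous_attains_inf[OF compact_Times[OF S compact_Icc] _ f] p0 by fastforce
  define M where "M = F p0 - f pmin"
  have "0 < \<epsilon> / (Tm - snd p0)" using p0 \<open>0 < \<epsilon>\<close> by auto
  then have "0 < M" using pmin[of p0] p0 unfolding M_def F_def by auto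
  define \<eta> where "\<eta> = min (Tm - snd p0) (\<epsilon> / M)"
  have "0 < \<eta>" using p0 \<open>0 < M\<close> \<open>0 < \<epsilon>\<close> unfolding \<eta>_def by auto
  have far: "F p0 < F p" if "p \<in> S \<times> {0..<Tm}" "Tm - \<eta> < snd p" for p
  proof -
    have "0 < Tm - snd p" "Tm - snd p < \<epsilon> / M" using that unfolding \<eta>_def by auto
    then have "M < \<epsilon> / (Tm - snd p)" using \<open>0 < M\<close> by (simp add: field_simps)
    with pmin[of p] that(1) show ?thesis unfolding M_def F_def by auto
  qed
  define K where "K = S \<times> {0..Tm - \<eta>}"
  have "continuous_on K F"
    unfolding F_def K_def using \<open>0 < \<eta>\<close>
    by (intro continuous_intros continuous_on_subset[OF f]) auto
  moreover have "p0 \<in> K" using p0 unfolding K_def \<eta>_def by auto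
  ultimately obtain pm where pm: "pm \<in> K" "\<And>p. p \<in> K \<Longrightarrow> F pm \<le> F p"
    using continuous_attains_inf[of K F] compact_Times[OF S compact_Icc] unfolding K_def by blast
  show ?thesis
  proof
    show "pm \<in> S \<times> {0..<Tm}" using pm(1) \<open>0 < \<eta>\<close> unfolding K_def by auto
    fix p assume p: "p \<in> S \<times> {0..<Tm}"
    show "f pm + \<epsilon> / (Tm - snd pm) \<le> f p + \<epsilon> / (Tm - snd p)"
    proof (cases "snd p \<le> Tm - \<eta>")
      case True
      then have "p \<in> K" using p unfolding K_def by auto
      then show ?thesis using pm(2) unfolding F_def by blast
    next
      case False
      then show ?thesis using far[OF p] pm(2)[OF \<open>p0 \<in> K\<close>] unfolding F_def by linarith
    qed
  qed
qed

lemma visc_sol_par_at_local_min: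
  assumes "visc_sol_par j Q u" "p0 \<in> Q" "C21_data U \<phi> G T H" "p0 \<in> U" "0 < e"
    and "\<And>p. p \<in> Q \<inter> ball p0 e \<Longrightarrow> u p0 - \<phi> p0 \<le> u p - \<phi> p"
  shows "0 \<le> T p0 - eig_j j (H p0)"
proof -
  have "\<forall>p0\<in>Q. \<forall>U \<phi> G T H. C21_data U \<phi> G T H \<and> p0 \<in> U \<and>
        (\<exists>e>0. \<forall>p\<in>Q \<inter> ball p0 e. u p - \<phi> p \<ge> u p0 - \<phi> p0)
        \<longrightarrow> T p0 - eig_j j (H p0) \<ge> 0"
    using assms(1) unfolding visc_sol_par_def by (elim conjE)
  then show ?thesis using assms(2-6) by blast
qed

lemma visc_sol_par_ge_subsolution:
  fixes u \<psi> :: "(real^'n) \<times> real \<Rightarrow> real"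
  assumes \<Omega>: "open \<Omega>" "bounded \<Omega>"
    and sol: "visc_sol_par j (\<Omega> \<times> {0<..}) u"
    and cu: "continuous_on (closure \<Omega> \<times> {0..}) u"
    and C: "C21_data UNIV \<psi> G T H"
    and initial: "\<And>x. x \<in> closure \<Omega> \<Longrightarrow> \<psi> (x, 0) \<le> u (x, 0)"
    and lateral: "\<And>x t. x \<in> frontier \<Omega> \<Longrightarrow> 0 < t \<Longrightarrow> \<psi> (x, t) \<le> u (x, t)"
    and sub: "\<And>x t. x \<in> \<Omega> \<Longrightarrow> 0 < t \<Longrightarrow> u (x, t) < \<psi> (x, t) \<Longrightarrow> T (x, t) - eig_j j (H (x, t)) \<le> 0"
    and x: "x \<in> closure \<Omega>" and t: "0 \<le> t"
  shows "\<psi> (x, t) \<le> u (x, t)"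
proof (rule ccontr)
  assume "\<not> \<psi> (x, t) \<le> u (x, t)"
  define Tm where "Tm = t + 1"
  define \<epsilon> where "\<epsilon> = (\<psi> (x, t) - u (x, t)) / 2"
  have "0 < \<epsilon>" using \<open>\<not> \<psi> (x, t) \<le> u (x, t)\<close> unfolding \<epsilon>_def by simp
  define \<phi> where "\<phi> p = \<psi> p - \<epsilon> / (Tm - snd p)" for p
  have "continuous_on (closure \<Omega> \<times> {0..Tm}) u" by (rule continuous_on_subset[OF cu]) auto
  then have "continuous_on (closure \<Omega> \<times> {0..Tm}) (\<lambda>p. u p - \<psi> p)"
    using C21_data_continuous_on[OF C] by (intro continuous_intros)
  moreover have "compact (closure \<Omega>)" using \<Omega>(2) by (simp add: compact_closure)
  moreover have "(x, t) \<in> closure \<Omega> \<times> {0..<Tm}" using x t unfolding Tm_def by simp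
  ultimately obtain pm where pm: "pm \<in> closure \<Omega> \<times> {0..<Tm}"
      "\<And>p. p \<in> closure \<Omega> \<times> {0..<Tm} \<Longrightarrow> u pm - \<phi> pm \<le> u p - \<phi> p"
    using time_blowup_penalty_attains_min[of "closure \<Omega>" Tm "\<lambda>p. u p - \<psi> p" \<epsilon>] \<open>0 < \<epsilon>\<close>
    unfolding \<phi>_def by (smt (verit))
  obtain xm tm where pm_eq: "pm = (xm, tm)" by fastforce
  have "0 < \<epsilon> / (Tm - tm)" using \<open>0 < \<epsilon>\<close> pm(1) unfolding pm_eq by auto
  moreover have "u pm - \<phi> pm \<le> u (x, t) - \<phi> (x, t)" using pm(2) x t unfolding Tm_def by auto
  moreover have "u (x, t) - \<phi> (x, t) = - \<epsilon>" unfolding \<phi>_def \<epsilon>_def Tm_def by (simp add: field_simps)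
  ultimately have "u pm < \<psi> pm" using \<open>0 < \<epsilon>\<close> unfolding \<phi>_def pm_eq snd_conv by linarith
  then have "0 < tm" using initial[of xm] pm(1) unfolding pm_eq by (cases "tm = 0") auto
  then have "xm \<notin> frontier \<Omega>" using lateral \<open>u pm < \<psi> pm\<close> unfolding pm_eq by force
  with pm(1) have "xm \<in> \<Omega>" using closure_minus_frontier_open[OF \<Omega>(1)] unfolding pm_eq by auto
  have C\<phi>: "C21_data (UNIV \<times> {..<Tm}) \<phi> G (\<lambda>p. T p - \<epsilon> / (Tm - snd p)^2) H"
    unfolding \<phi>_def by (rule C21_data_minus_time_blowup[OF C])
  have "0 \<le> (\<lambda>p. T p - \<epsilon> / (Tm - snd p)^2) pm - eig_j j (H pm)"
  proof (rule visc_sol_par_at_local_min[OF sol _ C\<phi>])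
    show "pm \<in> \<Omega> \<times> {0<..}" "pm \<in> UNIV \<times> {..<Tm}" "0 < Tm - tm"
      using pm(1) \<open>xm \<in> \<Omega>\<close> \<open>0 < tm\<close> unfolding pm_eq by auto
    fix p assume p: "p \<in> \<Omega> \<times> {0<..} \<inter> ball pm (Tm - tm)"
    then have "snd p < Tm"
      using dist_snd_le[of pm p] unfolding pm_eq by (auto simp: dist_real_def)
    then show "u pm - \<phi> pm \<le> u p - \<phi> p" using p closure_subset by (intro pm(2)) auto
  qed
  moreover have "T pm - eig_j j (H pm) \<le> 0"
    using sub \<open>xm \<in> \<Omega>\<close> \<open>0 < tm\<close> \<open>u pm < \<psi> pm\<close> unfolding pm_eq by blast
  moreover have "0 < \<epsilon> / (Tm - snd pm)^2" using \<open>0 < \<epsilon>\<close> pm(1) by auto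
  ultimately show False by linarith
qed

section \<open>Sign of the solutions on the ball\<close>

lemma inner_self_lt_of_mem_ball: "x \<in> ball 0 R \<Longrightarrow> x \<bullet> x < R^2"
  and inner_self_le_of_mem_cball: "x \<in> cball 0 R \<Longrightarrow> x \<bullet> x \<le> R^2"
  and inner_self_eq_of_mem_sphere: "x \<in> sphere 0 R \<Longrightarrow> x \<bullet> x = R^2"
  for x :: "'a::real_inner"
  by (simp_all add: dot_square_norm power_strict_mono power_mono)

lemma visc_sol_ell_nonneg:
  fixes z :: "real^'n \<Rightarrow> real"
  assumes R: "0 < R" and j: "1 \<le> j" "j \<le> CARD('n)"
    and sol: "visc_sol_ell j (ball 0 R) z" and cz: "continuous_on (cball 0 R) z"
    and bd: "\<And>x. x \<in> sphere 0 R \<Longrightarrow> 0 \<le> z x"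
    and x: "x \<in> cball 0 R"
  shows "0 \<le> z x"
proof (rule field_le_epsilon)
  fix e :: real assume "0 < e"
  define \<epsilon> where "\<epsilon> = e / R^2"
  have "0 < \<epsilon>" using \<open>0 < e\<close> R unfolding \<epsilon>_def by simp
  have "0 * coord_sqnorm {} x + \<epsilon> * (x \<bullet> x) + - \<epsilon> * R^2 \<le> z x"
  proof (rule visc_sol_ell_ge_strict_subsolution[OF open_ball bounded_ball sol _ C2_data_quadratic])
    show "continuous_on (closure (ball 0 R)) z" "x \<in> closure (ball 0 R)" using cz x R by auto
    show "0 * coord_sqnorm {} y + \<epsilon> * (y \<bullet> y) + - \<epsilon> * R^2 \<le> z y" if "y \<in> frontier (ball 0 R)" for y
      using that bd[of y] inner_self_eq_of_mem_sphere[of y] R by simp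
    show "0 < eig_j j (rank_one_proj_mat 0 (0 :: real^'n) (2 * 0) {} (2 * \<epsilon>))" for y :: "real^'n"
    proof -
      have "2 * \<epsilon> \<le> eig_j j (rank_one_proj_mat 0 (0 :: real^'n) (2 * 0) {} (2 * \<epsilon>))"
        using j by (intro eig_j_ge_if_unit_quadratic_form_ge) (auto simp: rank_one_proj_mat_quadratic_form)
      with \<open>0 < \<epsilon>\<close> show ?thesis by linarith
    qed
  qed
  moreover have "0 \<le> \<epsilon> * (x \<bullet> x)" using \<open>0 < \<epsilon>\<close> by simp
  moreover have "\<epsilon> * R^2 = e" using R unfolding \<epsilon>_def by simp
  ultimately show "0 \<le> z x + e" by simp
qed

lemma visc_sol_ell_nonpos_on_coord_subspace:
  fixes z :: "real^'n \<Rightarrow> real" and J :: "'n set"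
  assumes R: "0 < R" and J: "1 \<le> card J"
    and sol: "visc_sol_ell (card J) (ball 0 R) z" and cz: "continuous_on (cball 0 R) z"
    and bd: "\<And>x. x \<in> sphere 0 R \<Longrightarrow> z x = norm_out J x"
    and x0: "x0 \<in> ball 0 R" "norm_out J x0 = 0"
  shows "z x0 \<le> 0"
proof (rule field_le_epsilon)
  fix e :: real assume "0 < e"
  define b \<delta> where "b = e / (2 * R^2)" and "\<delta> = e / 2"
  define a where "a = 1 / (4 * \<delta>)"
  have "0 < b" "0 < \<delta>" using \<open>0 < e\<close> R unfolding b_def \<delta>_def by auto
  have "z x0 \<le> a * coord_sqnorm (-J) x0 + (-b) * (x0 \<bullet> x0) + (b * R^2 + \<delta>)"
  proof (rule visc_sol_ell_le_strict_supersolution[OF open_ball bounded_ball sol _ C2_data_quadratic])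
    show "continuous_on (closure (ball 0 R)) z" "x0 \<in> closure (ball 0 R)" using cz x0 R by auto
    show "z y \<le> a * coord_sqnorm (-J) y + (-b) * (y \<bullet> y) + (b * R^2 + \<delta>)"
      if "y \<in> frontier (ball 0 R)" for y
    proof -
      define s where "s = sqrt (coord_sqnorm (-J) y)"
      have "s^2 = coord_sqnorm (-J) y" unfolding s_def using coord_sqnorm_nonneg by simp
      moreover have "s \<le> a * s^2 + \<delta>"
      proof -
        have "a * s^2 + \<delta> - s = (s - 2 * \<delta>)^2 / (4 * \<delta>)"
          unfolding a_def using \<open>0 < \<delta>\<close> by (simp add: field_simps power2_eq_square)
        then show ?thesis using \<open>0 < \<delta>\<close> by (smt (verit) divide_nonneg_pos zero_le_power2)
      qed
      ultimately show ?thesis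
        using that bd[of y] inner_self_eq_of_mem_sphere[of y] R
        unfolding s_def norm_out_eq_sqrt_coord_sqnorm by simp
    qed
    show "eig_j (card J) (rank_one_proj_mat 0 0 (2 * a) (-J) (2 * - b)) < 0" for y :: "real^'n"
      using eig_j_rank_one_proj_mat_compl_le[OF J, of "2 * a" "2 * - b"] \<open>0 < b\<close> by linarith
  qed
  moreover have "coord_sqnorm (-J) x0 = 0"
    using x0(2) coord_sqnorm_nonneg[of "-J" x0] unfolding norm_out_eq_sqrt_coord_sqnorm by simp
  moreover have "0 \<le> b * (x0 \<bullet> x0)" using \<open>0 < b\<close> by simp
  moreover have "b * R^2 + \<delta> = e" using R unfolding b_def \<delta>_def by simp
  ultimately show "z x0 \<le> 0 + e" by simp
qed

lemma visc_sol_par_nonneg: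
  fixes u :: "(real^'n) \<times> real \<Rightarrow> real"
  assumes \<Omega>: "open \<Omega>" "bounded \<Omega>" and j: "1 \<le> j" "j \<le> CARD('n)"
    and sol: "visc_sol_par j (\<Omega> \<times> {0<..}) u"
    and cu: "continuous_on (closure \<Omega> \<times> {0..}) u"
    and initial: "\<And>x. x \<in> closure \<Omega> \<Longrightarrow> 0 \<le> u (x, 0)"
    and lateral: "\<And>x t. x \<in> frontier \<Omega> \<Longrightarrow> 0 < t \<Longrightarrow> 0 \<le> u (x, t)"
    and "x \<in> closure \<Omega>" "0 \<le> t"
  shows "0 \<le> u (x, t)"
proof (rule visc_sol_par_ge_subsolution[OF \<Omega> sol cu C21_data_zero])
  have "0 \<le> eig_j j (0 :: real^'n^'n)"
    using j by (intro eig_j_ge_if_unit_quadratic_form_ge) auto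
  then show "0 - eig_j j (0 :: real^'n^'n) \<le> 0" by simp
qed (use assms in auto)

lemma barrier_profile_nonneg_le:
  assumes "0 < q" "0 \<le> r" "r \<le> q"
  shows "0 \<le> barrier_profile q r" "barrier_profile q r \<le> 3 * q^2"
proof -
  have "(q - r) * (3 * q - r) \<le> q * (3 * q)" using assms by (intro mult_mono) auto
  moreover have "0 \<le> (q - r) * (3 * q - r)" using assms by simp
  ultimately show "0 \<le> barrier_profile q r" "barrier_profile q r \<le> 3 * q^2"
    unfolding barrier_profile_def by (simp_all add: algebra_simps power2_eq_square)
qed

lemma barrier_profile_neg: "q < r \<Longrightarrow> r < 3 * q \<Longrightarrow> barrier_profile q r < 0"
  unfolding barrier_profile_def by (intro mult_pos_neg) auto

lemma barrier_profile_pos: "r < q \<Longrightarrow> 0 < q \<Longrightarrow> 0 < barrier_profile q r"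
  unfolding barrier_profile_def by (intro mult_neg_neg) auto

text \<open>With decay rate \<open>\<mu> = 12 / q\<close>, the time derivative \<open>-\<mu> \<psi>\<close> dominates the lower bound
  \<open>c min (12 |x'|\<^sup>2 - 8 q) 0\<close> for the \<open>j\<close>-th eigenvalue of the Hessian wherever \<open>\<psi> > 0\<close>,
  since \<open>12 P(r) - (8 q - 12 r) q = 12 (r - 3 q / 2)\<^sup>2 + q\<^sup>2\<close>.\<close>
lemma barrier_subsolution:
  fixes J :: "'n::finite set"
  assumes q: "0 < q" and K: "0 < K" and J: "1 \<le> card J"
    and r: "coord_sqnorm J x < 3 * q" and pos: "0 < barrier K (12 / q) q J (x, t)"
  shows "-(12 / q) * barrier K (12 / q) q J (x, t)
           - eig_j (card J) (barrier_hess K (12 / q) q J (x, t)) \<le> 0"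
proof -
  define c r where "c = K * exp (-(12 / q) * t)" and "r = coord_sqnorm J x"
  define P where "P = barrier_profile q r"
  have "0 < c" using K unfolding c_def by simp
  have barrier_eq: "barrier K (12 / q) q J (x, t) = c * P"
    unfolding barrier_def c_def r_def P_def by simp
  then have "0 < P" using pos \<open>0 < c\<close> by (simp add: zero_less_mult_iff)
  then have "r < q"
    using r barrier_profile_neg[of q r] unfolding P_def r_def barrier_profile_def
    by (smt (verit) mult_nonneg_nonpos)
  have "coord_proj J x \<bullet> coord_proj J x = r"
    unfolding r_def by (simp add: coord_sqnorm_eq_norm_proj power2_norm_eq_inner)
  then have "c * min (12 * r - 8 * q) 0 \<le> eig_j (card J) (barrier_hess K (12 / q) q J (x, t))"
    using eig_j_barrier_hessian_ge[OF J less_imp_le[OF \<open>0 < c\<close>], of "coord_proj J x" q]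
    unfolding barrier_hess_def c_def r_def by (simp add: mult.assoc)
  moreover have "-(12 / q) * P \<le> min (12 * r - 8 * q) 0"
  proof -
    have "12 * P - (8 * q - 12 * r) * q = 12 * (r - 3 / 2 * q)^2 + q^2"
      unfolding P_def barrier_profile_def by (simp add: algebra_simps power2_eq_square)
    then have "8 * q - 12 * r \<le> (12 / q) * P" using q by (simp add: field_simps)
    moreover have "0 \<le> (12 / q) * P" using \<open>0 < P\<close> q by simp
    ultimately show ?thesis by simp
  qed
  then have "c * (-(12 / q) * P) \<le> c * min (12 * r - 8 * q) 0"
    using \<open>0 < c\<close> by (intro mult_left_mono) auto
  ultimately show ?thesis unfolding barrier_eq by (simp add: algebra_simps)
qed

lemma barrier_le_profile:
  assumes "0 \<le> \<mu>" "0 \<le> s" "0 < q" "0 \<le> K" "coord_sqnorm J y \<le> q"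
  shows "barrier K \<mu> q J (y, s) \<le> K * barrier_profile q (coord_sqnorm J y)"
proof -
  have "0 \<le> K * barrier_profile q (coord_sqnorm J y)"
    using barrier_profile_nonneg_le[OF assms(3) coord_sqnorm_nonneg assms(5)] assms(4) by simp
  moreover have "exp (-\<mu> * s) \<le> 1" using assms(1,2) by simp
  moreover have "barrier K \<mu> q J (y, s) = exp (-\<mu> * s) * (K * barrier_profile q (coord_sqnorm J y))"
    unfolding barrier_def by simp
  ultimately show ?thesis by (simp add: mult_left_le_one_le)
qed

lemma barrier_neg:
  assumes "0 < K" "q < coord_sqnorm J y" "coord_sqnorm J y < 3 * q"
  shows "barrier K \<mu> q J (y, s) < 0"
  using barrier_profile_neg[OF assms(2,3)] assms(1) unfolding barrier_def
  by (simp add: mult_pos_neg)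

lemma barrier_le_visc_sol_par:
  fixes u :: "(real^'n) \<times> real \<Rightarrow> real" and J :: "'n set"
  assumes R: "0 < R" and q: "0 < q" "R^2 < 3 * q" and K: "0 < K" and J: "1 \<le> card J"
    and sol: "visc_sol_par (card J) (ball 0 R \<times> {0<..}) u"
    and cu: "continuous_on (cball 0 R \<times> {0..}) u"
    and nonneg: "\<And>x t. x \<in> cball 0 R \<Longrightarrow> 0 \<le> t \<Longrightarrow> 0 \<le> u (x, t)"
    and initial: "\<And>x. x \<in> cball 0 R \<Longrightarrow> coord_sqnorm J x \<le> q \<Longrightarrow>
                    K * barrier_profile q (coord_sqnorm J x) \<le> u (x, 0)"
    and lateral: "\<And>x t. x \<in> sphere 0 R \<Longrightarrow> 0 < t \<Longrightarrow> coord_sqnorm J x \<le> q \<Longrightarrow>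
                    K * barrier_profile q (coord_sqnorm J x) \<le> u (x, t)"
    and x: "x \<in> cball 0 R" and t: "0 \<le> t"
  shows "barrier K (12 / q) q J (x, t) \<le> u (x, t)"
proof (rule visc_sol_par_ge_subsolution[OF open_ball bounded_ball sol _ C21_data_barrier])
  have below_3q: "coord_sqnorm J y < 3 * q" if "y \<in> cball 0 R" for y
    using coord_sqnorm_le_inner_self[of J y] inner_self_le_of_mem_cball[OF that] q(2) by linarith
  have on_boundary: "barrier K (12 / q) q J (y, s) \<le> u (y, s)"
    if "y \<in> cball 0 R" "0 \<le> s" "coord_sqnorm J y \<le> q \<Longrightarrow> K * barrier_profile q (coord_sqnorm J y) \<le> u (y, s)"
    for y s
  proof (cases "coord_sqnorm J y \<le> q")
    case True
    then have "barrier K (12 / q) q J (y, s) \<le> K * barrier_profile q (coord_sqnorm J y)"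
      using that(2) q(1) K by (intro barrier_le_profile) auto
    with that(3)[OF True] show ?thesis by linarith
  next
    case False
    then have "barrier K (12 / q) q J (y, s) < 0" using barrier_neg[OF K _ below_3q[OF that(1)]] by simp
    then show ?thesis using nonneg[OF that(1,2)] by linarith
  qed
  show "barrier K (12 / q) q J (y, 0) \<le> u (y, 0)" if "y \<in> closure (ball 0 R)" for y :: "real^'n"
    using that initial by (intro on_boundary) (auto simp: closure_ball[OF R])
  show "barrier K (12 / q) q J (y, s) \<le> u (y, s)" if "y \<in> frontier (ball 0 R)" "0 < s" for y :: "real^'n" and s
    using that lateral by (intro on_boundary) (auto simp: frontier_ball[OF R])
  fix y s assume y: "y \<in> ball 0 R" and "0 < s" and "u (y, s) < barrier K (12 / q) q J (y, s)"
  then have "0 < barrier K (12 / q) q J (y, s)" using nonneg[of y s] by force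
  with below_3q[of y] y show "-(12 / q) * barrier K (12 / q) q J (y, s)
      - eig_j (card J) (barrier_hess K (12 / q) q J (y, s)) \<le> 0"
    by (intro barrier_subsolution[OF q(1) K J]) auto
qed (use x t cu R in auto)

lemma norm_out_nonneg: "0 \<le> norm_out J x"
  by (simp add: norm_out_eq_sqrt_coord_sqnorm coord_sqnorm_nonneg)

lemma compact_continuous_pos_lower_bound:
  fixes f :: "'a::topological_space \<Rightarrow> real"
  assumes "compact C" "continuous_on C f" "\<And>x. x \<in> C \<Longrightarrow> 0 < f x"
  obtains \<delta> where "0 < \<delta>" "\<And>x. x \<in> C \<Longrightarrow> \<delta> \<le> f x"
proof (cases "C = {}")
  case False
  from continuous_attains_inf[OF assms(1) False assms(2)]
  obtain xm where "xm \<in> C" "\<And>y. y \<in> C \<Longrightarrow> f xm \<le> f y" by auto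
  then show ?thesis using that[of "f xm"] assms(3) by auto
qed (use that[of 1] in auto)

lemma coord_sqnorm_compl_of_mem_sphere:
  "x \<in> sphere 0 R \<Longrightarrow> coord_sqnorm (-J) x = R^2 - coord_sqnorm J x"
  using inner_self_eq_coord_sqnorm_add_compl[of x J] inner_self_eq_of_mem_sphere[of x R] by simp

lemma initial_datum_lower_bound:
  fixes u0 :: "real^'n \<Rightarrow> real"
  assumes q: "q < R^2" and cu0: "continuous_on (cball 0 R) u0"
    and u0_pos: "\<And>x. x \<in> ball 0 R \<Longrightarrow> 0 < u0 x"
    and u0_bd: "\<And>x. x \<in> sphere 0 R \<Longrightarrow> u0 x = norm_out J x"
  obtains \<delta> where "0 < \<delta>" "\<And>x. x \<in> cball 0 R \<Longrightarrow> coord_sqnorm J x \<le> q \<Longrightarrow> \<delta> \<le> u0 x"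
proof -
  define C where "C = cball 0 R \<inter> {x. coord_sqnorm J x \<le> q}"
  have "compact C" unfolding C_def
    by (intro compact_Int_closed compact_cball closed_Collect_le continuous_intros)
  moreover have "continuous_on C u0" using cu0 by (rule continuous_on_subset) (auto simp: C_def)
  moreover have "0 < u0 x" if "x \<in> C" for x
  proof (cases "x \<in> ball 0 R")
    case False
    then have "x \<in> sphere 0 R" using that unfolding C_def by auto
    moreover have "coord_sqnorm J x \<le> q" using that unfolding C_def by simp
    ultimately show ?thesis
      using u0_bd coord_sqnorm_compl_of_mem_sphere[of x R J] q
      unfolding norm_out_eq_sqrt_coord_sqnorm by simp
  qed (use u0_pos in auto)
  ultimately obtain \<delta> where "0 < \<delta>" "\<And>x. x \<in> C \<Longrightarrow> \<delta> \<le> u0 x"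
    using compact_continuous_pos_lower_bound by blast
  then show ?thesis by (intro that[of \<delta>]) (auto simp: C_def)
qed

lemma visc_sol_par_pos_on_coord_subspace:
  fixes u :: "(real^'n) \<times> real \<Rightarrow> real" and u0 :: "real^'n \<Rightarrow> real" and J :: "'n set"
  assumes R: "0 < R" and J: "1 \<le> card J"
    and sol: "visc_sol_par (card J) (ball 0 R \<times> {0<..}) u"
    and cu: "continuous_on (cball 0 R \<times> {0..}) u"
    and nonneg: "\<And>x t. x \<in> cball 0 R \<Longrightarrow> 0 \<le> t \<Longrightarrow> 0 \<le> u (x, t)"
    and cu0: "continuous_on (cball 0 R) u0"
    and u0_pos: "\<And>x. x \<in> ball 0 R \<Longrightarrow> 0 < u0 x"
    and u0_bd: "\<And>x. x \<in> sphere 0 R \<Longrightarrow> u0 x = norm_out J x"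
    and initial: "\<And>x. x \<in> cball 0 R \<Longrightarrow> u (x, 0) = u0 x"
    and lateral: "\<And>x t. x \<in> sphere 0 R \<Longrightarrow> 0 < t \<Longrightarrow> u (x, t) = norm_out J x"
    and x0: "x0 \<in> ball 0 R" "norm_out J x0 = 0" and t0: "0 < t0"
  shows "0 < u (x0, t0)"
proof -
  have "coord_sqnorm (-J) x0 = 0"
    using x0(2) coord_sqnorm_nonneg[of "-J" x0] unfolding norm_out_eq_sqrt_coord_sqnorm by simp
  then have "coord_sqnorm J x0 < R^2"
    using inner_self_eq_coord_sqnorm_add_compl[of x0 J] inner_self_lt_of_mem_ball[OF x0(1)] by simp
  define q where "q = (coord_sqnorm J x0 + R^2) / 2"
  have q: "coord_sqnorm J x0 < q" "q < R^2" "0 < q" "R^2 < 3 * q"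
    using \<open>coord_sqnorm J x0 < R^2\<close> coord_sqnorm_nonneg[of J x0] R unfolding q_def by auto
  obtain \<delta> where "0 < \<delta>" and \<delta>: "\<And>x. x \<in> cball 0 R \<Longrightarrow> coord_sqnorm J x \<le> q \<Longrightarrow> \<delta> \<le> u0 x"
    using initial_datum_lower_bound[OF q(2) cu0 u0_pos u0_bd] by blast
  define K where "K = min \<delta> (sqrt (R^2 - q)) / (3 * q^2)"
  have "0 < K" using \<open>0 < \<delta>\<close> q unfolding K_def by simp
  have K_profile: "K * barrier_profile q (coord_sqnorm J x) \<le> min \<delta> (sqrt (R^2 - q))"
    if "coord_sqnorm J x \<le> q" for x
  proof -
    have "K * barrier_profile q (coord_sqnorm J x) \<le> K * (3 * q^2)"
      using barrier_profile_nonneg_le(2)[OF q(3) coord_sqnorm_nonneg that] \<open>0 < K\<close>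
      by (intro mult_left_mono) auto
    then show ?thesis using q(3) unfolding K_def by simp
  qed
  have "barrier K (12 / q) q J (x0, t0) \<le> u (x0, t0)"
  proof (rule barrier_le_visc_sol_par[OF R q(3,4) \<open>0 < K\<close> J sol cu nonneg])
    show "K * barrier_profile q (coord_sqnorm J x) \<le> u (x, 0)"
      if "x \<in> cball 0 R" "coord_sqnorm J x \<le> q" for x
      using K_profile[OF that(2)] \<delta>[OF that] initial[OF that(1)] by linarith
    show "K * barrier_profile q (coord_sqnorm J x) \<le> u (x, t)"
      if "x \<in> sphere 0 R" "0 < t" "coord_sqnorm J x \<le> q" for x t
    proof -
      have "sqrt (R^2 - q) \<le> u (x, t)"
        using lateral[OF that(1,2)] coord_sqnorm_compl_of_mem_sphere[OF that(1)] that(3)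
        by (simp add: norm_out_eq_sqrt_coord_sqnorm)
      then show ?thesis using K_profile[OF that(3)] by linarith
    qed
  qed (use x0 t0 in auto)
  moreover have "0 < barrier K (12 / q) q J (x0, t0)"
    using barrier_profile_pos[OF q(1) q(3)] \<open>0 < K\<close> unfolding barrier_def by simp
  ultimately show ?thesis by linarith
qed

theorem mainTheorem14:
  fixes J :: "'n::finite set" and j :: nat and R :: real
    and u0 z :: "real^'n \<Rightarrow> real" and u :: "(real^'n) \<times> real \<Rightarrow> real"
  assumes "1 \<le> j" and "j \<le> CARD('n) - 1" and "card J = j"
    and "R > 0"
    and "continuous_on (cball 0 R) u0"
    and "\<forall>x\<in>ball 0 R. u0 x > 0"
    and "\<forall>x\<in>sphere 0 R. u0 x = norm_out J x"
    and "visc_sol_ell j (ball 0 R) z"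
    and "continuous_on (cball 0 R) z"
    and "\<forall>x\<in>sphere 0 R. z x = norm_out J x"
    and "visc_sol_par j (ball 0 R \<times> {0<..}) u"
    and "continuous_on (cball 0 R \<times> {0..}) u"
    and "\<forall>x\<in>sphere 0 R. \<forall>t>0. u (x, t) = norm_out J x"
    and "\<forall>x\<in>cball 0 R. u (x, 0) = u0 x"
  shows "(\<forall>x\<in>ball 0 R. norm_out J x = 0 \<longrightarrow> z x = 0) \<and>
         (\<forall>x0\<in>ball 0 R. norm_out J x0 = 0 \<longrightarrow> (\<forall>t>0. u (x0, t) > 0 \<and> 0 = z x0))"
proof -
  have J: "1 \<le> card J" and j: "j \<le> CARD('n)" using assms(1-3) by auto
  have z_zero: "z x = 0" if "x \<in> ball 0 R" "norm_out J x = 0" for x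
  proof (rule antisym)
    show "z x \<le> 0"
      using visc_sol_ell_nonpos_on_coord_subspace[OF assms(4) J _ assms(9) _ that] assms(3,8,10) by simp
    show "0 \<le> z x"
    proof (rule visc_sol_ell_nonneg[OF assms(4,1) j assms(8,9)])
      show "0 \<le> z y" if "y \<in> sphere 0 R" for y using assms(10) that norm_out_nonneg by simp
      show "x \<in> cball 0 R" using that(1) by simp
    qed
  qed
  have u_nonneg: "0 \<le> u (x, t)" if "x \<in> cball 0 R" "0 \<le> t" for x t
  proof (rule visc_sol_par_nonneg[OF open_ball bounded_ball assms(1) j assms(11)])
    have "0 \<le> u0 y" if "y \<in> cball 0 R" for y
      using assms(6,7) that norm_out_nonneg[of J y] by (cases "y \<in> ball 0 R") (auto simp: less_imp_le)
    then show "0 \<le> u (y, 0)" if "y \<in> closure (ball 0 R)" for y :: "real^'n"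
      using assms(4,14) that by simp
    show "0 \<le> u (y, s)" if "y \<in> frontier (ball 0 R)" "0 < s" for y :: "real^'n" and s
      using assms(4,13) that norm_out_nonneg by simp
  qed (use assms(4,12) that in simp_all)
  have u_pos: "0 < u (x0, t)" if "x0 \<in> ball 0 R" "norm_out J x0 = 0" "0 < t" for x0 t
  proof (rule visc_sol_par_pos_on_coord_subspace[OF assms(4) J _ assms(12) u_nonneg assms(5)])
    show "visc_sol_par (card J) (ball 0 R \<times> {0<..}) u" using assms(3,11) by simp
  qed (use assms(6,7,13,14) that in auto)
  show ?thesis using z_zero u_pos by auto
qed

end
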